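(* Let $A$ be a no-signalling empirical theory (finite set of labels) such that $Op(A)$, equipped with a convex structure, has only perfectly predictable measurements and contains a maximally mixed preparation, and consider only ontological representations that preserve convexity. Then $Op(A)$ is non-contextual if and only if it admits a canonical ontological representation that is non-contextual.
   Context: Operational theory $T=(P,M,D,O)$: preparations $P$, measurements $M$, finite outcome sets $O^m$, distributions $d_{p,m}$ on $O^m$; $p\sim p'$ iff $d_{p,m}=d_{p',m}\ \forall m$; $(m,k)\sim(m',k')$ iff $d_{p,m}(k)=d_{p,m'}(k')\ \forall p$. An ontological representation is $(\Omega,\mu,\xi)$, $\Omega$ countable, $\mu_p$ distributions on $\Omega$, $\xi_m(\lambda)$ distributions on $O^m$, with $\sum_\lambda\xi_m(\lambda)(k)\mu_p(\lambda)=d_{p,m}(k)$ and each $\lambda$ in the support of some $\mu_p$; it is non-contextual if $p\sim p'\Rightarrow\mu_p=\mu_{p'}$ and $(m,k)\sim(m',k')\Rightarrow\xi_m(\lambda)(k)=\xi_{m'}(\lambda)(k')\ \forall\lambda$. $T$ is non-contextual if it has a non-contextual representation. Convex structure: some preparations (resp. measurements with common outcome set) are designated as convex combinations $\sum_ic_ip_i$ (resp. $\sum_ic_im_i$), $c_i>0$, $\sum c_i=1$; a representation preserves convexity if $\mu_{\sum c_ip_i}=\sum c_i\mu_{p_i}$ and $\xi_{\sum c_im_i}(\lambda)=\sum c_i\xi_{m_i}(\lambda)$. A measurement $m$ is perfectly predictable if each $k\in O^m$ has a preparation $p_k$ with $d_{p_k,m}(k')=\delta_{k,k'}$. A preparation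 $p^{mix}$ is maximally mixed if (1) for every preparation $p'$ it is statistically equivalent to a convex combination (positive weights) of preparations including $p'$, and (2) for every perfectly predictable $m$ it is statistically equivalent to a positive-weight convex combination of preparations $p_k$, $k\in O^m$. Empirical theories: fix finite $O$; a system type is a finite set $X$ of labels with a cover $\mathcal M$ (subsets with union $X$, none properly contained in another); jointly measurable $U$ means $U\subseteq C\in\mathcal M$; $O^U$ = functions $U\to O$; a state is a family of distributions $\sigma_C$ on $O^C$, no-signalling if marginals on $C\cap C'$ agree, then $\sigma_U:=\sigma_C|_U$. $A=(X,\mathcal M,S,O)$; a global section is $\{d^\sigma\}$, distributions on $O^X$ with $d^\sigma|_C=\sigma_C$. $\sigma\sim\sigma'$ iff $\sigma_C=\sigma'_C\ \forall C$; $x\sim x'$ iff $\sigma_{\{x\}}=\sigma_{\{x'\}}\ \forall\sigma$. $Op(A)$: preparations $S$, measurements nonempty jointly measurable $U$ with outcome set $O^U$, $d_{\sigma,U}=\sigma_U$. Canonical representation: for a global section $d$ with $d^\sigma(s)=0$ whenever $s(x)\ne s(x')$ for some $x\sim x'$, and $d^\sigma=d^{\sigma'}$ for $\sigma\sim\sigma'$, with quotient $q:X\to X/{\sim}$: $\Omega=\{t:X/{\sim}\to O\}$ (restricted to supports), $\mu_\sigma(t)=d^\sigma(t\circ q)$, $\xi_U(t)(s)=1$ if $s=(t\circ q)|_U$, else $0$. *)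

theory Defs
  imports "HOL-Analysis.Analysis"
begin

text \<open>Preparations P, measurements M, outcome sets Out m, statistics d p m k.\<close>

definition prep_equiv ::
  "'p set \<Rightarrow> 'm set \<Rightarrow> ('m \<Rightarrow> 'k set) \<Rightarrow> ('p \<Rightarrow> 'm \<Rightarrow> 'k \<Rightarrow> real) \<Rightarrow> 'p \<Rightarrow> 'p \<Rightarrow> bool" where
  "prep_equiv P M Out d p p' \<longleftrightarrow> (\<forall>m\<in>M. \<forall>k\<in>Out m. d p m k = d p' m k)"

definition effect_equiv ::
  "'p set \<Rightarrow> 'm set \<Rightarrow> ('m \<Rightarrow> 'k set) \<Rightarrow> ('p \<Rightarrow> 'm \<Rightarrow> 'k \<Rightarrow> real) \<Rightarrow> 'm \<Rightarrow> 'k \<Rightarrow> 'm \<Rightarrow> 'k \<Rightarrow> bool" where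
  "effect_equiv P M Out d m k m' k' \<longleftrightarrow> (\<forall>p\<in>P. d p m k = d p m' k')"

definition ontological_rep ::
  "'p set \<Rightarrow> 'm set \<Rightarrow> ('m \<Rightarrow> 'k set) \<Rightarrow> ('p \<Rightarrow> 'm \<Rightarrow> 'k \<Rightarrow> real)
   \<Rightarrow> 'l set \<Rightarrow> ('p \<Rightarrow> 'l \<Rightarrow> real) \<Rightarrow> ('m \<Rightarrow> 'l \<Rightarrow> 'k \<Rightarrow> real) \<Rightarrow> bool" where
  "ontological_rep P M Out d \<Omega> \<mu> \<xi> \<longleftrightarrow>
     countable \<Omega> \<and>
     (\<forall>p\<in>P. (\<forall>l. 0 \<le> \<mu> p l) \<and> (\<forall>l. l \<notin> \<Omega> \<longrightarrow> \<mu> p l = 0) \<and> (\<mu> p has_sum 1) \<Omega>) \<and>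
     (\<forall>m\<in>M. \<forall>l\<in>\<Omega>. (\<forall>k. 0 \<le> \<xi> m l k) \<and> (\<forall>k. k \<notin> Out m \<longrightarrow> \<xi> m l k = 0)
                     \<and> sum (\<xi> m l) (Out m) = 1) \<and>
     (\<forall>p\<in>P. \<forall>m\<in>M. \<forall>k\<in>Out m. ((\<lambda>l. \<xi> m l k * \<mu> p l) has_sum d p m k) \<Omega>) \<and>
     (\<forall>l\<in>\<Omega>. \<exists>p\<in>P. 0 < \<mu> p l)"

definition noncontextual_rep ::
  "'p set \<Rightarrow> 'm set \<Rightarrow> ('m \<Rightarrow> 'k set) \<Rightarrow> ('p \<Rightarrow> 'm \<Rightarrow> 'k \<Rightarrow> real)
   \<Rightarrow> 'l set \<Rightarrow> ('p \<Rightarrow> 'l \<Rightarrow> real) \<Rightarrow> ('m \<Rightarrow> 'l \<Rightarrow> 'k \<Rightarrow> real) \<Rightarrow> bool" where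
  "noncontextual_rep P M Out d \<Omega> \<mu> \<xi> \<longleftrightarrow>
     (\<forall>p\<in>P. \<forall>p'\<in>P. prep_equiv P M Out d p p' \<longrightarrow> \<mu> p = \<mu> p') \<and>
     (\<forall>m\<in>M. \<forall>k\<in>Out m. \<forall>m'\<in>M. \<forall>k'\<in>Out m'. effect_equiv P M Out d m k m' k' \<longrightarrow>
        (\<forall>l\<in>\<Omega>. \<xi> m l k = \<xi> m' l k'))"

text \<open>Convex structure: designated convex combinations, given as lists of
  (weight, component) pairs with positive weights summing to 1.\<close>

definition convex_structure ::
  "'p set \<Rightarrow> 'm set \<Rightarrow> ('m \<Rightarrow> 'k set) \<Rightarrow> ('p \<times> (real \<times> 'p) list) set \<Rightarrow> ('m \<times> (real \<times> 'm) list) set \<Rightarrow> bool" where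
  "convex_structure P M Out CP CM \<longleftrightarrow>
     (\<forall>(p, cs)\<in>CP. p \<in> P \<and> cs \<noteq> [] \<and> (\<forall>(c, q)\<in>set cs. 0 < c \<and> q \<in> P)
                    \<and> sum_list (map fst cs) = 1) \<and>
     (\<forall>(m, cs)\<in>CM. m \<in> M \<and> cs \<noteq> [] \<and> (\<forall>(c, m')\<in>set cs. 0 < c \<and> m' \<in> M \<and> Out m' = Out m)
                    \<and> sum_list (map fst cs) = 1)"

definition preserves_convexity ::
  "('m \<Rightarrow> 'k set) \<Rightarrow> ('p \<times> (real \<times> 'p) list) set \<Rightarrow> ('m \<times> (real \<times> 'm) list) set
   \<Rightarrow> 'l set \<Rightarrow> ('p \<Rightarrow> 'l \<Rightarrow> real) \<Rightarrow> ('m \<Rightarrow> 'l \<Rightarrow> 'k \<Rightarrow> real) \<Rightarrow> bool" where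
  "preserves_convexity Out CP CM \<Omega> \<mu> \<xi> \<longleftrightarrow>
     (\<forall>(p, cs)\<in>CP. \<forall>l. \<mu> p l = (\<Sum>(c, q)\<leftarrow>cs. c * \<mu> q l)) \<and>
     (\<forall>(m, cs)\<in>CM. \<forall>l\<in>\<Omega>. \<forall>k\<in>Out m. \<xi> m l k = (\<Sum>(c, m')\<leftarrow>cs. c * \<xi> m' l k))"

definition prepares_outcome ::
  "('m \<Rightarrow> 'k set) \<Rightarrow> ('p \<Rightarrow> 'm \<Rightarrow> 'k \<Rightarrow> real) \<Rightarrow> 'm \<Rightarrow> 'k \<Rightarrow> 'p \<Rightarrow> bool" where
  "prepares_outcome Out d m k p \<longleftrightarrow> (\<forall>k'\<in>Out m. d p m k' = (if k = k' then 1 else 0))"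

definition perfectly_predictable ::
  "'p set \<Rightarrow> ('m \<Rightarrow> 'k set) \<Rightarrow> ('p \<Rightarrow> 'm \<Rightarrow> 'k \<Rightarrow> real) \<Rightarrow> 'm \<Rightarrow> bool" where
  "perfectly_predictable P Out d m \<longleftrightarrow> (\<forall>k\<in>Out m. \<exists>p\<in>P. prepares_outcome Out d m k p)"

definition maximally_mixed ::
  "'p set \<Rightarrow> 'm set \<Rightarrow> ('m \<Rightarrow> 'k set) \<Rightarrow> ('p \<Rightarrow> 'm \<Rightarrow> 'k \<Rightarrow> real)
   \<Rightarrow> ('p \<times> (real \<times> 'p) list) set \<Rightarrow> 'p \<Rightarrow> bool" where
  "maximally_mixed P M Out d CP pmix \<longleftrightarrow>
     pmix \<in> P \<and>
     (\<forall>p'\<in>P. \<exists>(p, cs)\<in>CP. prep_equiv P M Out d pmix p \<and> p' \<in> snd ` set cs) \<and>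
     (\<forall>m\<in>M. perfectly_predictable P Out d m \<longrightarrow>
        (\<exists>(p, cs)\<in>CP. prep_equiv P M Out d pmix p \<and>
           (\<forall>(c, q)\<in>set cs. \<exists>k\<in>Out m. prepares_outcome Out d m k q) \<and>
           (\<forall>k\<in>Out m. \<exists>(c, q)\<in>set cs. prepares_outcome Out d m k q)))"

text \<open>Non-contextuality of T within the class of convexity-preserving representations.
  Omega is countable, so it is taken (w.l.o.g.) as a subset of nat.\<close>

definition noncontextual_convex_theory ::
  "'p set \<Rightarrow> 'm set \<Rightarrow> ('m \<Rightarrow> 'k set) \<Rightarrow> ('p \<Rightarrow> 'm \<Rightarrow> 'k \<Rightarrow> real)
   \<Rightarrow> ('p \<times> (real \<times> 'p) list) set \<Rightarrow> ('m \<times> (real \<times> 'm) list) set \<Rightarrow> bool" where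
  "noncontextual_convex_theory P M Out d CP CM \<longleftrightarrow>
     (\<exists>(\<Omega> :: nat set) \<mu> \<xi>. ontological_rep P M Out d \<Omega> \<mu> \<xi> \<and> noncontextual_rep P M Out d \<Omega> \<mu> \<xi>
                          \<and> preserves_convexity Out CP CM \<Omega> \<mu> \<xi>)"

text \<open>Outcome assignments Out^U are the extensional functions U \<rightarrow>E Ob.
  A state sigma gives sig sigma C, a distribution on Out^C for every context C.\<close>

definition marg :: "'o set \<Rightarrow> 'x set \<Rightarrow> (('x \<Rightarrow> 'o) \<Rightarrow> real) \<Rightarrow> 'x set \<Rightarrow> ('x \<Rightarrow> 'o) \<Rightarrow> real" where
  "marg Ob C f U t = (\<Sum>s\<in>{s \<in> C \<rightarrow>\<^sub>E Ob. restrict s U = t}. f s)"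

definition is_distribution_on :: "('a \<Rightarrow> real) \<Rightarrow> 'a set \<Rightarrow> bool" where
  "is_distribution_on f A \<longleftrightarrow> (\<forall>a. 0 \<le> f a) \<and> (\<forall>a. a \<notin> A \<longrightarrow> f a = 0) \<and> sum f A = 1"

definition empirical_theory ::
  "'x set \<Rightarrow> 'x set set \<Rightarrow> 's set \<Rightarrow> 'o set \<Rightarrow> ('s \<Rightarrow> 'x set \<Rightarrow> ('x \<Rightarrow> 'o) \<Rightarrow> real) \<Rightarrow> bool" where
  "empirical_theory X Mc S Ob sig \<longleftrightarrow>
     finite X \<and> finite Ob \<and> \<Union>Mc = X \<and> (\<forall>C\<in>Mc. \<forall>C'\<in>Mc. \<not> C \<subset> C') \<and>
     (\<forall>\<sigma>\<in>S. \<forall>C\<in>Mc. is_distribution_on (sig \<sigma> C) (C \<rightarrow>\<^sub>E Ob))"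

definition no_signalling ::
  "'x set set \<Rightarrow> 's set \<Rightarrow> 'o set \<Rightarrow> ('s \<Rightarrow> 'x set \<Rightarrow> ('x \<Rightarrow> 'o) \<Rightarrow> real) \<Rightarrow> bool" where
  "no_signalling Mc S Ob sig \<longleftrightarrow>
     (\<forall>\<sigma>\<in>S. \<forall>C\<in>Mc. \<forall>C'\<in>Mc. marg Ob C (sig \<sigma> C) (C \<inter> C') = marg Ob C' (sig \<sigma> C') (C \<inter> C'))"

definition sigU ::
  "'x set set \<Rightarrow> 'o set \<Rightarrow> ('s \<Rightarrow> 'x set \<Rightarrow> ('x \<Rightarrow> 'o) \<Rightarrow> real) \<Rightarrow> 's \<Rightarrow> 'x set \<Rightarrow> ('x \<Rightarrow> 'o) \<Rightarrow> real" where
  "sigU Mc Ob sig \<sigma> U = (let C = (SOME C. C \<in> Mc \<and> U \<subseteq> C) in marg Ob C (sig \<sigma> C) U)"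

text \<open>The operational theory Op(A): preparations S, measurements the nonempty
  jointly measurable sets U, outcomes Out^U, statistics sigma_U.\<close>

definition OpM :: "'x set set \<Rightarrow> 'x set set" where
  "OpM Mc = {U. U \<noteq> {} \<and> (\<exists>C\<in>Mc. U \<subseteq> C)}"

definition OpO :: "'o set \<Rightarrow> 'x set \<Rightarrow> ('x \<Rightarrow> 'o) set" where
  "OpO Ob U = U \<rightarrow>\<^sub>E Ob"

definition Opd ::
  "'x set set \<Rightarrow> 'o set \<Rightarrow> ('s \<Rightarrow> 'x set \<Rightarrow> ('x \<Rightarrow> 'o) \<Rightarrow> real) \<Rightarrow> 's \<Rightarrow> 'x set \<Rightarrow> ('x \<Rightarrow> 'o) \<Rightarrow> real" where
  "Opd Mc Ob sig = sigU Mc Ob sig"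

definition global_section ::
  "'x set \<Rightarrow> 'x set set \<Rightarrow> 's set \<Rightarrow> 'o set \<Rightarrow> ('s \<Rightarrow> 'x set \<Rightarrow> ('x \<Rightarrow> 'o) \<Rightarrow> real)
   \<Rightarrow> ('s \<Rightarrow> ('x \<Rightarrow> 'o) \<Rightarrow> real) \<Rightarrow> bool" where
  "global_section X Mc S Ob sig dg \<longleftrightarrow>
     (\<forall>\<sigma>\<in>S. is_distribution_on (dg \<sigma>) (X \<rightarrow>\<^sub>E Ob) \<and>
             (\<forall>C\<in>Mc. \<forall>t\<in>C \<rightarrow>\<^sub>E Ob. marg Ob X (dg \<sigma>) C t = sig \<sigma> C t))"

definition state_equiv ::
  "'x set set \<Rightarrow> 'o set \<Rightarrow> ('s \<Rightarrow> 'x set \<Rightarrow> ('x \<Rightarrow> 'o) \<Rightarrow> real) \<Rightarrow> 's \<Rightarrow> 's \<Rightarrow> bool" where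
  "state_equiv Mc Ob sig \<sigma> \<sigma>' \<longleftrightarrow> (\<forall>C\<in>Mc. \<forall>t\<in>C \<rightarrow>\<^sub>E Ob. sig \<sigma> C t = sig \<sigma>' C t)"

text \<open>x ~ x' iff sigma_{x} = sigma_{x'} for all states (distributions on Out compared
  via the obvious identification of Out^{x} and Out^{x'} with Out).\<close>

definition label_equiv ::
  "'x set set \<Rightarrow> 's set \<Rightarrow> 'o set \<Rightarrow> ('s \<Rightarrow> 'x set \<Rightarrow> ('x \<Rightarrow> 'o) \<Rightarrow> real) \<Rightarrow> 'x \<Rightarrow> 'x \<Rightarrow> bool" where
  "label_equiv Mc S Ob sig x x' \<longleftrightarrow>
     (\<forall>\<sigma>\<in>S. \<forall>v\<in>Ob. sigU Mc Ob sig \<sigma> {x} (\<lambda>y\<in>{x}. v) = sigU Mc Ob sig \<sigma> {x'} (\<lambda>y\<in>{x'}. v))"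

definition label_rel ::
  "'x set \<Rightarrow> 'x set set \<Rightarrow> 's set \<Rightarrow> 'o set \<Rightarrow> ('s \<Rightarrow> 'x set \<Rightarrow> ('x \<Rightarrow> 'o) \<Rightarrow> real) \<Rightarrow> ('x \<times> 'x) set" where
  "label_rel X Mc S Ob sig = {(x, x'). x \<in> X \<and> x' \<in> X \<and> label_equiv Mc S Ob sig x x'}"

definition label_class ::
  "'x set \<Rightarrow> 'x set set \<Rightarrow> 's set \<Rightarrow> 'o set \<Rightarrow> ('s \<Rightarrow> 'x set \<Rightarrow> ('x \<Rightarrow> 'o) \<Rightarrow> real) \<Rightarrow> 'x \<Rightarrow> 'x set" where
  "label_class X Mc S Ob sig x = label_rel X Mc S Ob sig `` {x}"

definition canonical_admissible ::
  "'x set \<Rightarrow> 'x set set \<Rightarrow> 's set \<Rightarrow> 'o set \<Rightarrow> ('s \<Rightarrow> 'x set \<Rightarrow> ('x \<Rightarrow> 'o) \<Rightarrow> real)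
   \<Rightarrow> ('s \<Rightarrow> ('x \<Rightarrow> 'o) \<Rightarrow> real) \<Rightarrow> bool" where
  "canonical_admissible X Mc S Ob sig dg \<longleftrightarrow>
     global_section X Mc S Ob sig dg \<and>
     (\<forall>\<sigma>\<in>S. \<forall>s. \<forall>x\<in>X. \<forall>x'\<in>X. label_equiv Mc S Ob sig x x' \<and> s x \<noteq> s x' \<longrightarrow> dg \<sigma> s = 0) \<and>
     (\<forall>\<sigma>\<in>S. \<forall>\<sigma>'\<in>S. state_equiv Mc Ob sig \<sigma> \<sigma>' \<longrightarrow> dg \<sigma> = dg \<sigma>')"

text \<open>The canonical representation: ontic states t : X/~ \<rightarrow> Ob (restricted to supports).\<close>

definition lift_ontic ::
  "'x set \<Rightarrow> 'x set set \<Rightarrow> 's set \<Rightarrow> 'o set \<Rightarrow> ('s \<Rightarrow> 'x set \<Rightarrow> ('x \<Rightarrow> 'o) \<Rightarrow> real)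
   \<Rightarrow> ('x set \<Rightarrow> 'o) \<Rightarrow> 'x set \<Rightarrow> ('x \<Rightarrow> 'o)" where
  "lift_ontic X Mc S Ob sig t U = restrict (t \<circ> label_class X Mc S Ob sig) U"

definition can_Omega ::
  "'x set \<Rightarrow> 'x set set \<Rightarrow> 's set \<Rightarrow> 'o set \<Rightarrow> ('s \<Rightarrow> 'x set \<Rightarrow> ('x \<Rightarrow> 'o) \<Rightarrow> real)
   \<Rightarrow> ('s \<Rightarrow> ('x \<Rightarrow> 'o) \<Rightarrow> real) \<Rightarrow> ('x set \<Rightarrow> 'o) set" where
  "can_Omega X Mc S Ob sig dg =
     {t \<in> (X // label_rel X Mc S Ob sig) \<rightarrow>\<^sub>E Ob. \<exists>\<sigma>\<in>S. 0 < dg \<sigma> (lift_ontic X Mc S Ob sig t X)}"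

definition can_mu ::
  "'x set \<Rightarrow> 'x set set \<Rightarrow> 's set \<Rightarrow> 'o set \<Rightarrow> ('s \<Rightarrow> 'x set \<Rightarrow> ('x \<Rightarrow> 'o) \<Rightarrow> real)
   \<Rightarrow> ('s \<Rightarrow> ('x \<Rightarrow> 'o) \<Rightarrow> real) \<Rightarrow> 's \<Rightarrow> ('x set \<Rightarrow> 'o) \<Rightarrow> real" where
  "can_mu X Mc S Ob sig dg \<sigma> t =
     (if t \<in> can_Omega X Mc S Ob sig dg then dg \<sigma> (lift_ontic X Mc S Ob sig t X) else 0)"

definition can_xi ::
  "'x set \<Rightarrow> 'x set set \<Rightarrow> 's set \<Rightarrow> 'o set \<Rightarrow> ('s \<Rightarrow> 'x set \<Rightarrow> ('x \<Rightarrow> 'o) \<Rightarrow> real)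
   \<Rightarrow> 'x set \<Rightarrow> ('x set \<Rightarrow> 'o) \<Rightarrow> ('x \<Rightarrow> 'o) \<Rightarrow> real" where
  "can_xi X Mc S Ob sig U t s = (if s = lift_ontic X Mc S Ob sig t U then 1 else 0)"

text \<open>Op(A) admits a canonical ontological representation which is non-contextual
  (and, as only such representations are considered, convexity preserving).\<close>

definition admits_nc_canonical_rep ::
  "'x set \<Rightarrow> 'x set set \<Rightarrow> 's set \<Rightarrow> 'o set \<Rightarrow> ('s \<Rightarrow> 'x set \<Rightarrow> ('x \<Rightarrow> 'o) \<Rightarrow> real)
   \<Rightarrow> ('s \<times> (real \<times> 's) list) set \<Rightarrow> ('x set \<times> (real \<times> 'x set) list) set \<Rightarrow> bool" where
  "admits_nc_canonical_rep X Mc S Ob sig CP CM \<longleftrightarrow>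
     (\<exists>dg. canonical_admissible X Mc S Ob sig dg \<and>
       (let \<Omega> = can_Omega X Mc S Ob sig dg; \<mu> = can_mu X Mc S Ob sig dg; \<xi> = can_xi X Mc S Ob sig
        in ontological_rep S (OpM Mc) (OpO Ob) (Opd Mc Ob sig) \<Omega> \<mu> \<xi> \<and>
           noncontextual_rep S (OpM Mc) (OpO Ob) (Opd Mc Ob sig) \<Omega> \<mu> \<xi> \<and>
           preserves_convexity (OpO Ob) CP CM \<Omega> \<mu> \<xi>))"

end

theory Submission
  imports Defs
begin

text \<open>A non-contextual, convexity-preserving representation is automatically outcome-deterministic.
  Non-contextuality identifies the maximally mixed preparation with a mixture having every
  preparation as a component, so it charges every ontic state \<open>\<lambda>\<close>; for a measurement \<open>U\<close> it is
  also equivalent to a mixture of preparations making single outcomes certain, one of which must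
  then charge \<open>\<lambda>\<close>, and the response at \<open>\<lambda>\<close> gives that outcome with certainty. By no-signalling
  these outcomes are compatible under restriction, so each \<open>\<lambda>\<close> determines a value assignment
  \<open>X \<rightarrow> O\<close>, constant on label classes by non-contextuality of the effects. Pushing \<open>\<mu>\<^sub>\<sigma>\<close>
  forward along this assignment gives an admissible global section whose canonical representation
  reproduces the given response functions and is therefore non-contextual and convex. Conversely,
  a canonical representation is an ordinary one once its finite ontic space is enumerated.\<close>

lemma has_sum_sum:
  fixes f :: "'i \<Rightarrow> 'a \<Rightarrow> 'b::topological_comm_monoid_add"
  assumes "finite I" "\<And>i. i \<in> I \<Longrightarrow> (f i has_sum a i) A"
  shows "((\<lambda>x. \<Sum>i\<in>I. f i x) has_sum (\<Sum>i\<in>I. a i)) A"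
  using assms by (induction I rule: finite_induct) (simp_all add: has_sum_add)

lemma has_sum_weighted_sum_list:
  fixes f :: "'q \<Rightarrow> 'a \<Rightarrow> real"
  assumes "\<And>c q. (c, q) \<in> set cs \<Longrightarrow> (f q has_sum a q) A"
  shows "((\<lambda>x. \<Sum>(c, q)\<leftarrow>cs. c * f q x) has_sum (\<Sum>(c, q)\<leftarrow>cs. c * a q)) A"
  using assms
proof (induction cs)
  case (Cons p cs)
  then show ?case by (cases p) (auto intro!: has_sum_add has_sum_cmult_right)
qed simp

lemma weighted_sum_list_neq_0_ex:
  "(\<Sum>(c, q)\<leftarrow>cs. c * f q) \<noteq> (0::'a::semiring_0) \<Longrightarrow> \<exists>(c, q)\<in>set cs. f q \<noteq> 0"
  by (induction cs) auto

lemma has_sum_weighted_ge_1_imp_eq_1: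
  fixes \<xi> \<mu> :: "'l \<Rightarrow> real"
  assumes avg: "((\<lambda>l. \<xi> l * \<mu> l) has_sum D) \<Omega>" and "1 \<le> D" and prob: "(\<mu> has_sum 1) \<Omega>"
    and le1: "\<And>l. l \<in> \<Omega> \<Longrightarrow> \<xi> l \<le> 1" and nonneg: "\<And>l. l \<in> \<Omega> \<Longrightarrow> 0 \<le> \<mu> l"
    and "l \<in> \<Omega>" "0 < \<mu> l"
  shows "\<xi> l = 1"
proof -
  have "((\<lambda>l. \<mu> l + - (\<xi> l * \<mu> l)) has_sum (1 + - D)) \<Omega>"
    using has_sum_add[OF prob] avg has_sum_uminus by fastforce
  then have "((\<lambda>l. (1 - \<xi> l) * \<mu> l) has_sum (1 - D)) \<Omega>"
    by (simp add: algebra_simps)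
  then have "(1 - \<xi> l) * \<mu> l = 0"
    by (rule nonneg_has_sum_le_0D) (use assms in auto)
  then show ?thesis using \<open>0 < \<mu> l\<close> by simp
qed

lemma PiE_eq_PiE_imp_eq:
  assumes eq: "A \<rightarrow>\<^sub>E B = A' \<rightarrow>\<^sub>E B" and "A \<noteq> A'" and f: "f \<in> A \<rightarrow>\<^sub>E B" and g: "g \<in> A \<rightarrow>\<^sub>E B"
  shows "f = g"
proof -
  have B: "B \<subseteq> {undefined}"
    if "A \<rightarrow>\<^sub>E B = A' \<rightarrow>\<^sub>E B" "x \<in> A" "x \<notin> A'" "h \<in> A \<rightarrow>\<^sub>E B" for A A' x h
  proof
    fix v assume "v \<in> B"
    then have "h(x := v) \<in> A' \<rightarrow>\<^sub>E B" using that by (auto simp flip: that(1))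
    then show "v \<in> {undefined}" using \<open>x \<notin> A'\<close> by (metis PiE_arb fun_upd_same singletonI)
  qed
  have "B \<subseteq> {undefined}"
  proof (cases "A \<subseteq> A'")
    case True
    then obtain x where "x \<in> A'" "x \<notin> A" using \<open>A \<noteq> A'\<close> by blast
    then show ?thesis using B[OF eq[symmetric]] f eq by blast
  next
    case False
    then show ?thesis using B[OF eq] f by blast
  qed
  then have "h = (\<lambda>_. undefined)" if "h \<in> A \<rightarrow>\<^sub>E B" for h
    using that by (auto simp: fun_eq_iff PiE_iff extensional_def)
  then show ?thesis using f g by metis
qed

context
  fixes g :: "'n \<Rightarrow> 'l" and \<Omega>' :: "'n set" and \<Omega> :: "'l set"
    and \<mu> :: "'p \<Rightarrow> 'l \<Rightarrow> real" and \<xi> :: "'m \<Rightarrow> 'l \<Rightarrow> 'k \<Rightarrow> real"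
  assumes bij: "bij_betw g \<Omega>' \<Omega>"
begin

definition reindexed_mu :: "'p \<Rightarrow> 'n \<Rightarrow> real" where
  "reindexed_mu p n = (if n \<in> \<Omega>' then \<mu> p (g n) else 0)"

lemma ontological_rep_reindex:
  assumes rep: "ontological_rep P M Out d \<Omega> \<mu> \<xi>" and "countable \<Omega>'"
  shows "ontological_rep P M Out d \<Omega>' reindexed_mu (\<lambda>m n. \<xi> m (g n))"
proof -
  have g: "g n \<in> \<Omega>" if "n \<in> \<Omega>'" for n using bij that by (auto simp: bij_betw_def)
  have has_sum_mu: "((\<lambda>n. f (g n) * reindexed_mu p n) has_sum a) \<Omega>' \<longleftrightarrow> ((\<lambda>l. f l * \<mu> p l) has_sum a) \<Omega>"
    for f a p
  proof -
    have "((\<lambda>n. f (g n) * reindexed_mu p n) has_sum a) \<Omega>'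
        \<longleftrightarrow> ((\<lambda>n. f (g n) * \<mu> p (g n)) has_sum a) \<Omega>'"
      by (rule has_sum_cong) (simp add: reindexed_mu_def)
    then show ?thesis using has_sum_reindex_bij_betw[OF bij, of "\<lambda>l. f l * \<mu> p l"] by simp
  qed
  show ?thesis
    unfolding ontological_rep_def
  proof (intro conjI ballI allI impI)
    fix p assume "p \<in> P"
    then show "(reindexed_mu p has_sum 1) \<Omega>'"
      using rep has_sum_mu[of "\<lambda>_. 1"] unfolding ontological_rep_def by simp
  next
    fix p m k assume "p \<in> P" "m \<in> M" "k \<in> Out m"
    then show "((\<lambda>n. \<xi> m (g n) k * reindexed_mu p n) has_sum d p m k) \<Omega>'"
      using rep has_sum_mu[of "\<lambda>l. \<xi> m l k"] unfolding ontological_rep_def by simp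
  next
    fix n assume "n \<in> \<Omega>'"
    then show "\<exists>p\<in>P. 0 < reindexed_mu p n"
      using rep g unfolding ontological_rep_def reindexed_mu_def by simp
  qed (use assms g in \<open>auto simp: ontological_rep_def reindexed_mu_def\<close>)
qed

lemma noncontextual_rep_reindex:
  assumes "noncontextual_rep P M Out d \<Omega> \<mu> \<xi>"
  shows "noncontextual_rep P M Out d \<Omega>' reindexed_mu (\<lambda>m n. \<xi> m (g n))"
  using assms bij_betw_apply[OF bij]
  unfolding noncontextual_rep_def reindexed_mu_def by (auto 0 3)

lemma preserves_convexity_reindex:
  assumes "preserves_convexity Out CP CM \<Omega> \<mu> \<xi>"
  shows "preserves_convexity Out CP CM \<Omega>' reindexed_mu (\<lambda>m n. \<xi> m (g n))"
  using assms bij_betw_apply[OF bij]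
  unfolding preserves_convexity_def reindexed_mu_def by (auto simp: case_prod_unfold)

end

lemma noncontextual_convex_theoryI:
  fixes \<Omega> :: "'l set"
  assumes "ontological_rep P M Out d \<Omega> \<mu> \<xi>" "noncontextual_rep P M Out d \<Omega> \<mu> \<xi>"
    and "preserves_convexity Out CP CM \<Omega> \<mu> \<xi>"
  shows "noncontextual_convex_theory P M Out d CP CM"
proof -
  have countable: "countable \<Omega>" using assms(1) unfolding ontological_rep_def by blast
  then have "bij_betw (to_nat_on \<Omega>) \<Omega> (to_nat_on \<Omega> ` \<Omega>)"
    by (intro inj_on_imp_bij_betw inj_on_to_nat_on)
  then have bij: "bij_betw (inv_into \<Omega> (to_nat_on \<Omega>)) (to_nat_on \<Omega> ` \<Omega>) \<Omega>"
    by (rule bij_betw_inv_into)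
  show ?thesis
    unfolding noncontextual_convex_theory_def
    using ontological_rep_reindex[OF bij assms(1) countable_image[OF countable]]
      noncontextual_rep_reindex[OF bij assms(2)]
      preserves_convexity_reindex[OF bij assms(3)] by blast
qed

lemma marg_marg:
  assumes "finite C" "finite Ob" "V \<subseteq> W" "W \<subseteq> C"
  shows "marg Ob W (marg Ob C f W) V t = marg Ob C f V t"
proof -
  let ?fibre = "\<lambda>w. {s \<in> {s \<in> C \<rightarrow>\<^sub>E Ob. restrict s V = t}. restrict s W = w}"
  have "marg Ob W (marg Ob C f W) V t = (\<Sum>w\<in>{w \<in> W \<rightarrow>\<^sub>E Ob. restrict w V = t}. sum f (?fibre w))"
    unfolding marg_def
  proof (rule sum.cong[OF refl])
    fix w assume "w \<in> {w \<in> W \<rightarrow>\<^sub>E Ob. restrict w V = t}"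
    then have "{s \<in> C \<rightarrow>\<^sub>E Ob. restrict s W = w} = ?fibre w"
      using \<open>V \<subseteq> W\<close> by (auto simp: Int_absorb1)
    then show "sum f {s \<in> C \<rightarrow>\<^sub>E Ob. restrict s W = w} = sum f (?fibre w)" by simp
  qed
  also have "\<dots> = sum f {s \<in> C \<rightarrow>\<^sub>E Ob. restrict s V = t}"
    by (rule sum.group) (use assms in \<open>auto simp: finite_PiE Int_absorb1 Int_absorb2 finite_subset\<close>)
  finally show ?thesis unfolding marg_def .
qed

lemma marg_self: "t \<in> C \<rightarrow>\<^sub>E Ob \<Longrightarrow> marg Ob C f C t = f t"
proof -
  assume "t \<in> C \<rightarrow>\<^sub>E Ob"
  then have "{s \<in> C \<rightarrow>\<^sub>E Ob. restrict s C = t} = {t}"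
    by (auto simp: PiE_restrict)
  then show ?thesis unfolding marg_def by simp
qed

lemma marg_eq_sum_if:
  assumes "finite C" "finite Ob"
  shows "marg Ob C f U t = (\<Sum>s\<in>C \<rightarrow>\<^sub>E Ob. if restrict s U = t then f s else 0)"
  unfolding marg_def using assms by (simp add: sum.inter_filter finite_PiE)

lemma chosen_context:
  assumes "C \<in> Mc" "U \<subseteq> C"
  shows "(SOME C. C \<in> Mc \<and> U \<subseteq> C) \<in> Mc" "U \<subseteq> (SOME C. C \<in> Mc \<and> U \<subseteq> C)"
  using someI[of "\<lambda>C. C \<in> Mc \<and> U \<subseteq> C", OF conjI[OF assms]] by auto

lemma prep_equiv_if_state_equiv:
  assumes "state_equiv Mc Ob sig \<sigma> \<sigma>'"
  shows "prep_equiv S (OpM Mc) (OpO Ob) (Opd Mc Ob sig) \<sigma> \<sigma>'"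
  unfolding prep_equiv_def
proof (intro ballI)
  fix U k assume "U \<in> OpM Mc"
  then obtain C where "C \<in> Mc" "U \<subseteq> C" unfolding OpM_def by auto
  then have "(SOME C. C \<in> Mc \<and> U \<subseteq> C) \<in> Mc" by (rule chosen_context)
  then show "Opd Mc Ob sig \<sigma> U k = Opd Mc Ob sig \<sigma>' U k"
    using assms unfolding Opd_def sigU_def Let_def marg_def state_equiv_def by simp
qed

locale empirical_model =
  fixes X :: "'x set" and Mc :: "'x set set" and S :: "'s set" and Ob :: "'o set"
    and sig :: "'s \<Rightarrow> 'x set \<Rightarrow> ('x \<Rightarrow> 'o) \<Rightarrow> real"
  assumes empirical: "empirical_theory X Mc S Ob sig"
begin

lemma finite_X: "finite X" and finite_Ob: "finite Ob"
  using empirical unfolding empirical_theory_def by auto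

lemma OpM_subset: "U \<in> OpM Mc \<Longrightarrow> U \<subseteq> X"
  using empirical unfolding empirical_theory_def OpM_def by auto

lemma finite_OpO: "U \<subseteq> X \<Longrightarrow> finite (OpO Ob U)"
  unfolding OpO_def using finite_X finite_Ob by (auto intro: finite_PiE finite_subset)

lemma singleton_OpM: "x \<in> X \<Longrightarrow> {x} \<in> OpM Mc"
  using empirical unfolding empirical_theory_def OpM_def by auto

lemma sigU_context:
  assumes "C \<in> Mc" "t \<in> C \<rightarrow>\<^sub>E Ob"
  shows "sigU Mc Ob sig \<sigma> C t = sig \<sigma> C t"
proof -
  let ?C = "SOME C'. C' \<in> Mc \<and> C \<subseteq> C'"
  have "?C \<in> Mc" "C \<subseteq> ?C" using chosen_context[OF assms(1) order_refl] by auto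
  moreover have "\<not> C \<subset> ?C"
    using empirical \<open>?C \<in> Mc\<close> assms(1) unfolding empirical_theory_def by blast
  ultimately have "?C = C" by blast
  then show ?thesis unfolding sigU_def Let_def using marg_self[OF assms(2)] by simp
qed

text \<open>No-signalling makes the marginal of \<open>\<sigma>\<^sub>U\<close> independent of the context chosen for \<open>U\<close>.\<close>

lemma sigU_marg:
  assumes "no_signalling Mc S Ob sig" "\<sigma> \<in> S" "V \<subseteq> U" "C \<in> Mc" "U \<subseteq> C"
  shows "sigU Mc Ob sig \<sigma> V t = marg Ob U (sigU Mc Ob sig \<sigma> U) V t"
proof -
  define CU where "CU = (SOME C. C \<in> Mc \<and> U \<subseteq> C)"
  define CV where "CV = (SOME C. C \<in> Mc \<and> V \<subseteq> C)"
  have CU: "CU \<in> Mc" "U \<subseteq> CU" using chosen_context[OF assms(4,5)] unfolding CU_def by auto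
  have CV: "CV \<in> Mc" "V \<subseteq> CV"
    using chosen_context[OF assms(4)] assms(3,5) unfolding CV_def by auto
  have fin: "finite CU" "finite CV"
    using CU(1) CV(1) empirical finite_X unfolding empirical_theory_def by (auto intro: finite_subset)
  have V: "V \<subseteq> CU \<inter> CV" using CU CV assms(3) by auto
  have "marg Ob U (sigU Mc Ob sig \<sigma> U) V t = marg Ob CU (sig \<sigma> CU) V t"
    unfolding sigU_def Let_def CU_def[symmetric] using marg_marg[OF fin(1) finite_Ob assms(3) CU(2)] .
  also have "\<dots> = marg Ob (CU \<inter> CV) (marg Ob CU (sig \<sigma> CU) (CU \<inter> CV)) V t"
    using marg_marg[OF fin(1) finite_Ob V] by simp
  also have "\<dots> = marg Ob (CU \<inter> CV) (marg Ob CV (sig \<sigma> CV) (CU \<inter> CV)) V t"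
    using assms(1,2) CU(1) CV(1) unfolding no_signalling_def by metis
  also have "\<dots> = marg Ob CV (sig \<sigma> CV) V t"
    using marg_marg[OF fin(2) finite_Ob V] by simp
  finally show ?thesis unfolding sigU_def Let_def CV_def[symmetric] by simp
qed

end

section \<open>The canonical representation of an admissible global section\<close>

context empirical_model
begin

abbreviation classes :: "'x set set" where
  "classes \<equiv> X // label_rel X Mc S Ob sig"

abbreviation lift :: "('x set \<Rightarrow> 'o) \<Rightarrow> 'x set \<Rightarrow> 'x \<Rightarrow> 'o" where
  "lift t U \<equiv> lift_ontic X Mc S Ob sig t U"

lemma label_class_in_classes: "x \<in> X \<Longrightarrow> label_class X Mc S Ob sig x \<in> classes"
  unfolding label_class_def by (rule quotientI)

lemma mem_label_class: "x \<in> X \<Longrightarrow> x \<in> label_class X Mc S Ob sig x"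
  unfolding label_class_def label_rel_def label_equiv_def by simp

lemma lift_ontic_PiE: "t \<in> classes \<rightarrow>\<^sub>E Ob \<Longrightarrow> U \<subseteq> X \<Longrightarrow> lift t U \<in> U \<rightarrow>\<^sub>E Ob"
  unfolding lift_ontic_def using label_class_in_classes by (auto simp: subset_iff)

lemma lift_ontic_restrict: "U \<subseteq> X \<Longrightarrow> lift t U = restrict (lift t X) U"
  unfolding lift_ontic_def by (simp add: Int_absorb1)

lemma inj_on_lift_ontic: "inj_on (\<lambda>t. lift t X) (classes \<rightarrow>\<^sub>E Ob)"
proof (rule inj_onI)
  fix t t' assume t: "t \<in> classes \<rightarrow>\<^sub>E Ob" "t' \<in> classes \<rightarrow>\<^sub>E Ob" and eq: "lift t X = lift t' X"
  have "t c = t' c" if "c \<in> classes" for c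
  proof -
    from that obtain x where "x \<in> X" "c = label_class X Mc S Ob sig x"
      unfolding label_class_def by (auto elim: quotientE)
    then show ?thesis using fun_cong[OF eq, of x] unfolding lift_ontic_def by simp
  qed
  then show "t = t'" using t by (auto intro: PiE_ext)
qed

lemma admissible_nonneg: "canonical_admissible X Mc S Ob sig dg \<Longrightarrow> \<sigma> \<in> S \<Longrightarrow> 0 \<le> dg \<sigma> s"
  unfolding canonical_admissible_def global_section_def is_distribution_on_def by blast

lemma admissible_const_on_label_equiv:
  assumes "canonical_admissible X Mc S Ob sig dg" "\<sigma> \<in> S" "dg \<sigma> s \<noteq> 0"
    and "x \<in> X" "x' \<in> X" "label_equiv Mc S Ob sig x x'"
  shows "s x = s x'"
  using assms unfolding canonical_admissible_def by blast

text \<open>Admissible sections are supported on assignments that are constant on label classes,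
  and these are exactly the lifts of assignments on the classes.\<close>

lemma lift_ontic_image_can_Omega:
  assumes adm: "canonical_admissible X Mc S Ob sig dg"
  shows "(\<lambda>t. lift t X) ` can_Omega X Mc S Ob sig dg = {s \<in> X \<rightarrow>\<^sub>E Ob. \<exists>\<sigma>\<in>S. 0 < dg \<sigma> s}"
proof (intro equalityI subsetI)
  fix s assume "s \<in> (\<lambda>t. lift t X) ` can_Omega X Mc S Ob sig dg"
  then show "s \<in> {s \<in> X \<rightarrow>\<^sub>E Ob. \<exists>\<sigma>\<in>S. 0 < dg \<sigma> s}"
    using lift_ontic_PiE unfolding can_Omega_def by auto
next
  fix s assume "s \<in> {s \<in> X \<rightarrow>\<^sub>E Ob. \<exists>\<sigma>\<in>S. 0 < dg \<sigma> s}"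
  then obtain \<sigma> where s: "s \<in> X \<rightarrow>\<^sub>E Ob" "\<sigma> \<in> S" "0 < dg \<sigma> s" by auto
  define t where "t = restrict (\<lambda>c. s (SOME x. x \<in> c)) classes"
  have rep: "(SOME y. y \<in> label_class X Mc S Ob sig x) \<in> X \<and>
      label_equiv Mc S Ob sig x (SOME y. y \<in> label_class X Mc S Ob sig x)" if "x \<in> X" for x
    using someI[where P="\<lambda>y. y \<in> label_class X Mc S Ob sig x", OF mem_label_class[OF that]]
    unfolding label_class_def label_rel_def by auto
  have "lift t X = s"
  proof (rule ext)
    fix x show "lift t X x = s x"
    proof (cases "x \<in> X")
      case True
      have "dg \<sigma> s \<noteq> 0" using s(3) by simp
      then have "s (SOME y. y \<in> label_class X Mc S Ob sig x) = s x"
        using admissible_const_on_label_equiv[OF adm s(2) _ True] rep[OF True] by metis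
      then show ?thesis using True label_class_in_classes unfolding lift_ontic_def t_def by simp
    qed (use s(1) in \<open>auto simp: lift_ontic_def\<close>)
  qed
  moreover have "t \<in> classes \<rightarrow>\<^sub>E Ob"
  proof -
    have "s (SOME x. x \<in> c) \<in> Ob" if "c \<in> classes" for c
    proof -
      from that obtain x where "x \<in> X" "c = label_class X Mc S Ob sig x"
        unfolding label_class_def by (auto elim: quotientE)
      then show ?thesis using rep s(1) by auto
    qed
    then show ?thesis unfolding t_def by auto
  qed
  ultimately show "s \<in> (\<lambda>t. lift t X) ` can_Omega X Mc S Ob sig dg"
    using s(2,3) unfolding can_Omega_def by force
qed

lemma sum_can_Omega:
  assumes adm: "canonical_admissible X Mc S Ob sig dg" and "\<sigma> \<in> S"
  shows "(\<Sum>t\<in>can_Omega X Mc S Ob sig dg. if P (lift t X) then dg \<sigma> (lift t X) else 0)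
       = (\<Sum>s\<in>X \<rightarrow>\<^sub>E Ob. if P s then dg \<sigma> s else 0)"
proof -
  let ?h = "\<lambda>s. if P s then dg \<sigma> s else 0"
  have "inj_on (\<lambda>t. lift t X) (can_Omega X Mc S Ob sig dg)"
    using inj_on_lift_ontic by (rule inj_on_subset) (auto simp: can_Omega_def)
  from sum.reindex[OF this, of ?h]
  have "(\<Sum>t\<in>can_Omega X Mc S Ob sig dg. ?h (lift t X)) = (\<Sum>s\<in>{s \<in> X \<rightarrow>\<^sub>E Ob. \<exists>\<sigma>\<in>S. 0 < dg \<sigma> s}. ?h s)"
    unfolding lift_ontic_image_can_Omega[OF adm] by simp
  also have "\<dots> = (\<Sum>s\<in>X \<rightarrow>\<^sub>E Ob. ?h s)"
  proof (rule sum.mono_neutral_left)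
    show "\<forall>s\<in>(X \<rightarrow>\<^sub>E Ob) - {s \<in> X \<rightarrow>\<^sub>E Ob. \<exists>\<sigma>\<in>S. 0 < dg \<sigma> s}. ?h s = 0"
    proof
      fix s assume "s \<in> (X \<rightarrow>\<^sub>E Ob) - {s \<in> X \<rightarrow>\<^sub>E Ob. \<exists>\<sigma>\<in>S. 0 < dg \<sigma> s}"
      then have "\<not> 0 < dg \<sigma> s" using \<open>\<sigma> \<in> S\<close> by blast
      then show "?h s = 0" using admissible_nonneg[OF adm \<open>\<sigma> \<in> S\<close>, of s] by simp
    qed
  qed (auto simp: finite_PiE finite_X finite_Ob)
  finally show ?thesis .
qed

lemma admissible_marg_eq_sigU:
  assumes adm: "canonical_admissible X Mc S Ob sig dg" and "\<sigma> \<in> S" "U \<in> OpM Mc"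
  shows "marg Ob X (dg \<sigma>) U k = sigU Mc Ob sig \<sigma> U k"
proof -
  define C where "C = (SOME C. C \<in> Mc \<and> U \<subseteq> C)"
  obtain C0 where "C0 \<in> Mc" "U \<subseteq> C0" using assms(3) unfolding OpM_def by auto
  then have C: "C \<in> Mc" "U \<subseteq> C" unfolding C_def by (rule chosen_context)+
  have "C \<subseteq> X" using C(1) empirical unfolding empirical_theory_def by auto
  have gs: "marg Ob X (dg \<sigma>) C s = sig \<sigma> C s" if "s \<in> C \<rightarrow>\<^sub>E Ob" for s
    using adm assms(2) C(1) that unfolding canonical_admissible_def global_section_def by blast
  have "marg Ob X (dg \<sigma>) U k = marg Ob C (marg Ob X (dg \<sigma>) C) U k"
    using marg_marg[OF finite_X finite_Ob C(2) \<open>C \<subseteq> X\<close>] by simp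
  also have "\<dots> = marg Ob C (sig \<sigma> C) U k"
    unfolding marg_def by (rule sum.cong) (auto simp: gs[unfolded marg_def])
  finally show ?thesis unfolding sigU_def C_def Let_def .
qed

lemma finite_can_Omega: "finite (can_Omega X Mc S Ob sig dg)"
proof -
  have "finite classes" by (rule finite_quotient[OF finite_X]) (auto simp: label_rel_def)
  then show ?thesis
    by (rule finite_subset[rotated, OF finite_PiE[OF _ finite_Ob]]) (auto simp: can_Omega_def)
qed

lemma sum_can_mu:
  assumes adm: "canonical_admissible X Mc S Ob sig dg" and "\<sigma> \<in> S"
  shows "sum (can_mu X Mc S Ob sig dg \<sigma>) (can_Omega X Mc S Ob sig dg) = 1"
proof -
  have "sum (can_mu X Mc S Ob sig dg \<sigma>) (can_Omega X Mc S Ob sig dg)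
      = (\<Sum>t\<in>can_Omega X Mc S Ob sig dg. if True then dg \<sigma> (lift t X) else 0)"
    unfolding can_mu_def by simp
  also have "\<dots> = sum (dg \<sigma>) (X \<rightarrow>\<^sub>E Ob)"
    using sum_can_Omega[OF assms, of "\<lambda>_. True"] by simp
  finally show ?thesis
    using assms unfolding canonical_admissible_def global_section_def is_distribution_on_def by simp
qed

lemma sum_can_xi_can_mu:
  assumes adm: "canonical_admissible X Mc S Ob sig dg" and "\<sigma> \<in> S" "U \<in> OpM Mc"
  shows "(\<Sum>t\<in>can_Omega X Mc S Ob sig dg. can_xi X Mc S Ob sig U t k * can_mu X Mc S Ob sig dg \<sigma> t)
       = Opd Mc Ob sig \<sigma> U k"
proof -
  have "(\<Sum>t\<in>can_Omega X Mc S Ob sig dg. can_xi X Mc S Ob sig U t k * can_mu X Mc S Ob sig dg \<sigma> t)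
      = (\<Sum>t\<in>can_Omega X Mc S Ob sig dg. if restrict (lift t X) U = k then dg \<sigma> (lift t X) else 0)"
    by (rule sum.cong) (auto simp: can_xi_def can_mu_def lift_ontic_restrict[OF OpM_subset[OF assms(3)]])
  also have "\<dots> = (\<Sum>s\<in>X \<rightarrow>\<^sub>E Ob. if restrict s U = k then dg \<sigma> s else 0)"
    by (rule sum_can_Omega[OF adm assms(2)])
  also have "\<dots> = Opd Mc Ob sig \<sigma> U k"
    using admissible_marg_eq_sigU[OF assms] marg_eq_sum_if[OF finite_X finite_Ob]
    unfolding Opd_def by simp
  finally show ?thesis .
qed

lemma canonical_ontological_rep:
  assumes adm: "canonical_admissible X Mc S Ob sig dg"
  shows "ontological_rep S (OpM Mc) (OpO Ob) (Opd Mc Ob sig) (can_Omega X Mc S Ob sig dg)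
           (can_mu X Mc S Ob sig dg) (can_xi X Mc S Ob sig)"
proof -
  let ?\<Omega> = "can_Omega X Mc S Ob sig dg" and ?\<mu> = "can_mu X Mc S Ob sig dg" and ?\<xi> = "can_xi X Mc S Ob sig"
  have fin: "finite ?\<Omega>" by (rule finite_can_Omega)
  have lift: "lift t U \<in> OpO Ob U" if "t \<in> ?\<Omega>" "U \<in> OpM Mc" for t U
    using lift_ontic_PiE OpM_subset that unfolding can_Omega_def OpO_def by blast
  show ?thesis
    unfolding ontological_rep_def
  proof (intro conjI ballI allI impI)
    show "countable ?\<Omega>" using fin by (rule countable_finite)
  next
    fix \<sigma> assume "\<sigma> \<in> S"
    then show "(?\<mu> \<sigma> has_sum 1) ?\<Omega>"
      using has_sum_finite[OF fin, of "?\<mu> \<sigma>"] sum_can_mu[OF adm] by simp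
  next
    fix \<sigma> U k assume "\<sigma> \<in> S" "U \<in> OpM Mc"
    then show "((\<lambda>t. ?\<xi> U t k * ?\<mu> \<sigma> t) has_sum Opd Mc Ob sig \<sigma> U k) ?\<Omega>"
      using has_sum_finite[OF fin, of "\<lambda>t. ?\<xi> U t k * ?\<mu> \<sigma> t"] sum_can_xi_can_mu[OF adm] by simp
  next
    fix U t assume "U \<in> OpM Mc" "t \<in> ?\<Omega>"
    then show "sum (?\<xi> U t) (OpO Ob U) = 1"
      using lift finite_OpO[OF OpM_subset] unfolding can_xi_def by simp
  next
    fix U t k assume "U \<in> OpM Mc" "t \<in> ?\<Omega>" "k \<notin> OpO Ob U"
    then show "?\<xi> U t k = 0" using lift unfolding can_xi_def by auto
  next
    fix t assume "t \<in> ?\<Omega>"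
    then show "\<exists>\<sigma>\<in>S. 0 < ?\<mu> \<sigma> t" unfolding can_mu_def can_Omega_def by auto
  next
    fix \<sigma> t assume "\<sigma> \<in> S"
    then show "0 \<le> ?\<mu> \<sigma> t" unfolding can_mu_def using admissible_nonneg[OF adm] by simp
  qed (simp_all add: can_mu_def can_xi_def)
qed

lemma canonical_response_convex:
  assumes "convex_structure S (OpM Mc) (OpO Ob) CP CM" "(m, cs) \<in> CM"
    and t: "t \<in> can_Omega X Mc S Ob sig dg" and "k \<in> OpO Ob m"
  shows "can_xi X Mc S Ob sig m t k = (\<Sum>(c, m')\<leftarrow>cs. c * can_xi X Mc S Ob sig m' t k)"
proof -
  have m: "m \<in> OpM Mc" "sum_list (map fst cs) = 1"
    and cs: "\<And>c m'. (c, m') \<in> set cs \<Longrightarrow> m' \<in> OpM Mc \<and> OpO Ob m' = OpO Ob m"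
    using assms(1,2) unfolding convex_structure_def by fastforce+
  have tP: "t \<in> classes \<rightarrow>\<^sub>E Ob" using t unfolding can_Omega_def by blast
  text \<open>Outcome sets are \<open>U \<rightarrow>\<^sub>E Ob\<close>, so distinct measurements share one only if it has at most
    one element.\<close>
  have same: "can_xi X Mc S Ob sig m' t k = can_xi X Mc S Ob sig m t k" if "(c, m') \<in> set cs" for c m'
  proof (cases "m' = m")
    case False
    have eq: "m' \<rightarrow>\<^sub>E Ob = m \<rightarrow>\<^sub>E Ob" and "m' \<in> OpM Mc" using cs[OF that] unfolding OpO_def by auto
    have "lift t m' \<in> m' \<rightarrow>\<^sub>E Ob" by (rule lift_ontic_PiE[OF tP OpM_subset[OF \<open>m' \<in> OpM Mc\<close>]])
    moreover have "lift t m \<in> m' \<rightarrow>\<^sub>E Ob" using lift_ontic_PiE[OF tP OpM_subset[OF m(1)]] eq by simp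
    moreover have "k \<in> m' \<rightarrow>\<^sub>E Ob" using \<open>k \<in> OpO Ob m\<close> eq unfolding OpO_def by simp
    ultimately show ?thesis
      using PiE_eq_PiE_imp_eq[OF eq False] unfolding can_xi_def by metis
  qed simp
  have "(\<Sum>(c, m')\<leftarrow>cs. c * can_xi X Mc S Ob sig m' t k) = (\<Sum>(c, m')\<leftarrow>cs. c * can_xi X Mc S Ob sig m t k)"
    by (rule arg_cong[where f=sum_list], rule map_cong) (auto simp: same)
  also have "\<dots> = sum_list (map fst cs) * can_xi X Mc S Ob sig m t k"
    by (simp add: sum_list_mult_const[symmetric] case_prod_unfold)
  also have "\<dots> = can_xi X Mc S Ob sig m t k"
    using m(2) by simp
  finally show ?thesis by simp
qed

end

section \<open>Outcome determinism of non-contextual convex representations\<close>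

locale noncontextual_convex_rep =
  fixes P :: "'p set" and M :: "'m set" and Out :: "'m \<Rightarrow> 'k set" and d :: "'p \<Rightarrow> 'm \<Rightarrow> 'k \<Rightarrow> real"
    and CP :: "('p \<times> (real \<times> 'p) list) set" and CM :: "('m \<times> (real \<times> 'm) list) set"
    and \<Omega> :: "'l set" and \<mu> :: "'p \<Rightarrow> 'l \<Rightarrow> real" and \<xi> :: "'m \<Rightarrow> 'l \<Rightarrow> 'k \<Rightarrow> real"
    and pmix :: 'p
  assumes convex: "convex_structure P M Out CP CM"
    and predictable: "\<forall>m\<in>M. perfectly_predictable P Out d m"
    and mixed: "maximally_mixed P M Out d CP pmix"
    and rep: "ontological_rep P M Out d \<Omega> \<mu> \<xi>"
    and noncontextual: "noncontextual_rep P M Out d \<Omega> \<mu> \<xi>"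
    and preserves: "preserves_convexity Out CP CM \<Omega> \<mu> \<xi>"
begin

lemma mu_nonneg: "p \<in> P \<Longrightarrow> 0 \<le> \<mu> p l"
  and mu_has_sum: "p \<in> P \<Longrightarrow> (\<mu> p has_sum 1) \<Omega>"
  and xi_nonneg: "m \<in> M \<Longrightarrow> l \<in> \<Omega> \<Longrightarrow> 0 \<le> \<xi> m l k"
  and xi_outside: "m \<in> M \<Longrightarrow> l \<in> \<Omega> \<Longrightarrow> k \<notin> Out m \<Longrightarrow> \<xi> m l k = 0"
  and xi_sum: "m \<in> M \<Longrightarrow> l \<in> \<Omega> \<Longrightarrow> sum (\<xi> m l) (Out m) = 1"
  and xi_has_sum: "p \<in> P \<Longrightarrow> m \<in> M \<Longrightarrow> k \<in> Out m \<Longrightarrow> ((\<lambda>l. \<xi> m l k * \<mu> p l) has_sum d p m k) \<Omega>"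
  using rep unfolding ontological_rep_def by blast+

lemma finite_Out: "m \<in> M \<Longrightarrow> l \<in> \<Omega> \<Longrightarrow> finite (Out m)"
  using xi_sum sum.infinite by fastforce

lemma xi_le_1:
  assumes "m \<in> M" "l \<in> \<Omega>"
  shows "\<xi> m l k \<le> 1"
proof (cases "k \<in> Out m")
  case True
  then have "\<xi> m l k \<le> sum (\<xi> m l) (Out m)"
    using finite_Out[OF assms] xi_nonneg[OF assms] by (intro member_le_sum) auto
  then show ?thesis using xi_sum[OF assms] by simp
qed (simp add: xi_outside[OF assms])

lemma convex_decomposition:
  assumes "(p, cs) \<in> CP"
  shows "p \<in> P" "\<And>c q. (c, q) \<in> set cs \<Longrightarrow> 0 < c \<and> q \<in> P" "\<mu> p l = (\<Sum>(c, q)\<leftarrow>cs. c * \<mu> q l)"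
  using assms convex preserves unfolding convex_structure_def preserves_convexity_def by fastforce+

lemma mu_eq_if_prep_equiv: "p \<in> P \<Longrightarrow> p' \<in> P \<Longrightarrow> prep_equiv P M Out d p p' \<Longrightarrow> \<mu> p = \<mu> p'"
  using noncontextual unfolding noncontextual_rep_def by blast

lemma mu_pmix_eq:
  assumes "(p, cs) \<in> CP" "prep_equiv P M Out d pmix p"
  shows "\<mu> pmix = \<mu> p"
  using mu_eq_if_prep_equiv assms(2) mixed convex_decomposition(1)[OF assms(1)]
  unfolding maximally_mixed_def by blast

text \<open>Every preparation is a component of a mixture equivalent to \<open>pmix\<close>, so \<open>\<mu> pmix\<close>
  charges every ontic state that some preparation charges.\<close>

lemma mu_pmix_pos:
  assumes "l \<in> \<Omega>"
  shows "0 < \<mu> pmix l"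
proof -
  obtain p where p: "p \<in> P" "0 < \<mu> p l" using rep assms unfolding ontological_rep_def by blast
  obtain p0 cs c where mix: "(p0, cs) \<in> CP" "prep_equiv P M Out d pmix p0" "(c, p) \<in> set cs"
    using mixed p(1) unfolding maximally_mixed_def by fastforce
  have "c * \<mu> p l \<le> (\<Sum>(c, q)\<leftarrow>cs. c * \<mu> q l)"
    using mix(3) convex_decomposition(2)[OF mix(1)] mu_nonneg
    by (intro member_le_sum_list) (force simp: case_prod_unfold)+
  moreover have "0 < c * \<mu> p l" using convex_decomposition(2)[OF mix(1,3)] p by simp
  ultimately show ?thesis
    using mu_pmix_eq[OF mix(1,2)] convex_decomposition(3)[OF mix(1)] by simp
qed

lemma xi_eq_1_if_certain:
  assumes "q \<in> P" "m \<in> M" "k \<in> Out m" "d q m k = 1" "l \<in> \<Omega>" "0 < \<mu> q l"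
  shows "\<xi> m l k = 1"
  using xi_has_sum[OF assms(1-3)] assms(4-6) mu_has_sum[OF assms(1)] xi_le_1[OF assms(2)] mu_nonneg[OF assms(1)]
  by (intro has_sum_weighted_ge_1_imp_eq_1) auto

lemma xi_eq_0_if_other:
  assumes "m \<in> M" "l \<in> \<Omega>" "\<xi> m l k = 1" "k' \<noteq> k"
  shows "\<xi> m l k' = 0"
proof (cases "k' \<in> Out m")
  case True
  have "k \<in> Out m" using xi_outside[OF assms(1,2)] assms(3) by force
  with True have "sum (\<xi> m l) {k, k'} \<le> sum (\<xi> m l) (Out m)"
    using finite_Out[OF assms(1,2)] xi_nonneg[OF assms(1,2)] by (intro sum_mono2) auto
  then show ?thesis
    using xi_sum[OF assms(1,2)] assms(3,4) xi_nonneg[OF assms(1,2), of k'] by simp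
qed (simp add: xi_outside[OF assms(1,2)])

text \<open>Decomposing \<open>pmix\<close> into preparations that make outcomes of \<open>m\<close> certain, one of
  them must charge \<open>l\<close>, because \<open>\<mu> pmix\<close> does.\<close>

lemma certain_preparation_charges:
  assumes "m \<in> M" "l \<in> \<Omega>"
  shows "\<exists>q\<in>P. \<exists>k\<in>Out m. prepares_outcome Out d m k q \<and> 0 < \<mu> q l"
proof -
  obtain p0 cs where mix: "(p0, cs) \<in> CP" "prep_equiv P M Out d pmix p0"
    and certain: "\<And>c q. (c, q) \<in> set cs \<Longrightarrow> \<exists>k\<in>Out m. prepares_outcome Out d m k q"
    using mixed predictable assms(1) unfolding maximally_mixed_def by fastforce
  have "(\<Sum>(c, q)\<leftarrow>cs. c * \<mu> q l) \<noteq> 0"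
    using mu_pmix_pos[OF assms(2)] mu_pmix_eq[OF mix] convex_decomposition(3)[OF mix(1)] by simp
  then obtain c q where cq: "(c, q) \<in> set cs" "\<mu> q l \<noteq> 0"
    using weighted_sum_list_neq_0_ex by fastforce
  have "q \<in> P" using convex_decomposition(2)[OF mix(1) cq(1)] by blast
  then show ?thesis using certain[OF cq(1)] cq(2) mu_nonneg[of q l] by force
qed

lemma xi_deterministic:
  assumes "m \<in> M" "l \<in> \<Omega>"
  obtains k where "k \<in> Out m" "\<xi> m l k = 1"
proof -
  obtain q k where "q \<in> P" "k \<in> Out m" "prepares_outcome Out d m k q" "0 < \<mu> q l"
    using certain_preparation_charges[OF assms] by blast
  then show ?thesis
    using that xi_eq_1_if_certain[OF _ assms(1) _ _ assms(2)] unfolding prepares_outcome_def by force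
qed

end

section \<open>From a non-contextual representation to an admissible global section\<close>

locale noncontextual_empirical_model =
  empirical_model X Mc S Ob sig +
  noncontextual_convex_rep S "OpM Mc" "OpO Ob" "Opd Mc Ob sig" CP CM \<Omega> \<mu> \<xi> pmix
  for X :: "'x set" and Mc :: "'x set set" and S :: "'s set" and Ob :: "'o set"
    and sig :: "'s \<Rightarrow> 'x set \<Rightarrow> ('x \<Rightarrow> 'o) \<Rightarrow> real"
    and CP CM and \<Omega> :: "'l set" and \<mu> \<xi> pmix +
  assumes no_signalling: "no_signalling Mc S Ob sig"
begin

lemma xi_restrict:
  assumes U: "U \<in> OpM Mc" and W: "W \<in> OpM Mc" "W \<subseteq> U" and l: "l \<in> \<Omega>" and k: "\<xi> U l k = 1"
  shows "\<xi> W l (restrict k W) = 1"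
proof -
  obtain q k' where q: "q \<in> S" "k' \<in> OpO Ob U" "prepares_outcome (OpO Ob) (Opd Mc Ob sig) U k' q"
    "0 < \<mu> q l"
    using certain_preparation_charges[OF U l] by blast
  have "\<xi> U l k' = 1"
    using xi_eq_1_if_certain[OF q(1) U q(2) _ l q(4)] q(2,3) unfolding prepares_outcome_def by simp
  then have "k' = k" using xi_eq_0_if_other[OF U l k] by force
  have kU: "k \<in> OpO Ob U" using xi_outside[OF U l] k by force
  obtain C where C: "C \<in> Mc" "U \<subseteq> C" using U unfolding OpM_def by auto
  text \<open>A preparation making \<open>k\<close> certain also makes its marginal \<open>k|\<^sub>W\<close> certain.\<close>
  have "Opd Mc Ob sig q W (restrict k W) = marg Ob U (Opd Mc Ob sig q U) W (restrict k W)"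
    unfolding Opd_def by (rule sigU_marg[OF no_signalling q(1) W(2) C])
  also have "\<dots> = (\<Sum>s\<in>{s \<in> OpO Ob U. restrict s W = restrict k W}. if k = s then 1 else 0)"
    unfolding marg_def OpO_def[symmetric]
    by (rule sum.cong) (use q(3) \<open>k' = k\<close> in \<open>auto simp: prepares_outcome_def\<close>)
  also have "\<dots> = 1"
    using kU finite_OpO[OF OpM_subset[OF U]] by (simp add: sum.delta)
  finally have "Opd Mc Ob sig q W (restrict k W) = 1" .
  moreover have "restrict k W \<in> OpO Ob W" using kU W(2) unfolding OpO_def by auto
  ultimately show ?thesis using xi_eq_1_if_certain[OF q(1) W(1) _ _ l q(4)] by simp
qed

definition ontic_value :: "'l \<Rightarrow> 'x \<Rightarrow> 'o" where
  "ontic_value l = (\<lambda>x\<in>X. THE v. v \<in> Ob \<and> \<xi> {x} l (\<lambda>_\<in>{x}. v) = 1)"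

lemma ex1_singleton_value:
  assumes x: "x \<in> X" and l: "l \<in> \<Omega>"
  shows "\<exists>!v. v \<in> Ob \<and> \<xi> {x} l (\<lambda>_\<in>{x}. v) = 1"
proof -
  obtain k where k: "k \<in> OpO Ob {x}" "\<xi> {x} l k = 1"
    using xi_deterministic[OF singleton_OpM[OF x] l] .
  then have "k = (\<lambda>_\<in>{x}. k x)" "k x \<in> Ob"
    unfolding OpO_def by (auto simp: PiE_iff extensional_def)
  moreover have "v = v'" if "\<xi> {x} l (\<lambda>_\<in>{x}. v) = 1" "\<xi> {x} l (\<lambda>_\<in>{x}. v') = 1" for v v'
  proof (rule ccontr)
    assume "v \<noteq> v'"
    then have "(\<lambda>_\<in>{x}. v') \<noteq> (\<lambda>_\<in>{x}. v)" by (metis restrict_apply' singletonI)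
    then show False using xi_eq_0_if_other[OF singleton_OpM[OF x] l that(1)] that(2) by simp
  qed
  ultimately show ?thesis using k(2) by metis
qed

lemma ontic_value_in: "x \<in> X \<Longrightarrow> l \<in> \<Omega> \<Longrightarrow> ontic_value l x \<in> Ob"
  and xi_ontic_value: "x \<in> X \<Longrightarrow> l \<in> \<Omega> \<Longrightarrow> \<xi> {x} l (\<lambda>_\<in>{x}. ontic_value l x) = 1"
  using theI'[OF ex1_singleton_value] unfolding ontic_value_def by auto

lemma ontic_value_unique:
  "x \<in> X \<Longrightarrow> l \<in> \<Omega> \<Longrightarrow> v \<in> Ob \<Longrightarrow> \<xi> {x} l (\<lambda>_\<in>{x}. v) = 1 \<Longrightarrow> ontic_value l x = v"
  using the1_equality[OF ex1_singleton_value] unfolding ontic_value_def by auto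

lemma ontic_value_PiE: "l \<in> \<Omega> \<Longrightarrow> ontic_value l \<in> X \<rightarrow>\<^sub>E Ob"
  using ontic_value_in unfolding ontic_value_def by auto

lemma xi_eq_indicator:
  assumes U: "U \<in> OpM Mc" and l: "l \<in> \<Omega>"
  shows "\<xi> U l k = (if k = restrict (ontic_value l) U then 1 else 0)"
proof -
  obtain k0 where k0: "k0 \<in> OpO Ob U" "\<xi> U l k0 = 1" using xi_deterministic[OF U l] .
  have "k0 x = restrict (ontic_value l) U x" for x
  proof (cases "x \<in> U")
    case True
    then have x: "x \<in> X" using OpM_subset[OF U] by auto
    have "\<xi> {x} l (restrict k0 {x}) = 1"
      using xi_restrict[OF U singleton_OpM[OF x] _ l k0(2)] True by simp
    moreover have "restrict k0 {x} = (\<lambda>_\<in>{x}. k0 x)" by auto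
    moreover have "k0 x \<in> Ob" using k0(1) True unfolding OpO_def by auto
    ultimately show ?thesis using ontic_value_unique[OF x l] True by simp
  qed (use k0(1) in \<open>auto simp: OpO_def\<close>)
  then have "k0 = restrict (ontic_value l) U" by auto
  then show ?thesis using k0(2) xi_eq_0_if_other[OF U l k0(2)] by auto
qed

definition value_distribution :: "'s \<Rightarrow> ('x \<Rightarrow> 'o) \<Rightarrow> real" where
  "value_distribution \<sigma> s = (\<Sum>\<^sub>\<infinity>l\<in>\<Omega>. if ontic_value l = s then \<mu> \<sigma> l else 0)"

lemma has_sum_value_distribution:
  assumes "\<sigma> \<in> S"
  shows "((\<lambda>l. if ontic_value l = s then \<mu> \<sigma> l else 0) has_sum value_distribution \<sigma> s) \<Omega>"
proof -
  have "\<mu> \<sigma> summable_on \<Omega>" using mu_has_sum[OF assms] by (rule has_sum_imp_summable)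
  then have "(\<lambda>l. if ontic_value l = s then \<mu> \<sigma> l else 0) summable_on \<Omega>"
    by (rule summable_on_comparison_test) (simp_all add: mu_nonneg[OF assms])
  then show ?thesis unfolding value_distribution_def by (simp add: summable_iff_has_sum_infsum[symmetric])
qed

lemma value_distribution_eq_0: "(\<And>l. l \<in> \<Omega> \<Longrightarrow> ontic_value l \<noteq> s) \<Longrightarrow> value_distribution \<sigma> s = 0"
  unfolding value_distribution_def by (rule infsum_0) auto

lemma has_sum_value_distribution_event:
  assumes "\<sigma> \<in> S"
  shows "((\<lambda>l. if Q (ontic_value l) then \<mu> \<sigma> l else 0) has_sum
           (\<Sum>s\<in>X \<rightarrow>\<^sub>E Ob. if Q s then value_distribution \<sigma> s else 0)) \<Omega>"
proof -
  let ?T = "X \<rightarrow>\<^sub>E Ob"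
  have fin: "finite ?T" by (simp add: finite_PiE finite_X finite_Ob)
  have "((\<lambda>l. \<Sum>s\<in>?T. if Q s then (if ontic_value l = s then \<mu> \<sigma> l else 0) else 0) has_sum
           (\<Sum>s\<in>?T. if Q s then value_distribution \<sigma> s else 0)) \<Omega>"
  proof (rule has_sum_sum[OF fin])
    fix s show "((\<lambda>l. if Q s then (if ontic_value l = s then \<mu> \<sigma> l else 0) else 0) has_sum
        (if Q s then value_distribution \<sigma> s else 0)) \<Omega>"
      using has_sum_value_distribution[OF assms] by (cases "Q s") simp_all
  qed
  moreover have "(\<Sum>s\<in>?T. if Q s then (if ontic_value l = s then \<mu> \<sigma> l else 0) else 0)
      = (if Q (ontic_value l) then \<mu> \<sigma> l else 0)" if "l \<in> \<Omega>" for l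
  proof -
    have "(\<Sum>s\<in>?T. if Q s then (if ontic_value l = s then \<mu> \<sigma> l else 0) else 0)
        = (\<Sum>s\<in>?T. if ontic_value l = s then (if Q s then \<mu> \<sigma> l else 0) else 0)"
      by (rule sum.cong) auto
    then show ?thesis using ontic_value_PiE[OF that] fin by (simp add: sum.delta)
  qed
  ultimately show ?thesis by (subst (asm) has_sum_cong) simp_all
qed

lemma value_distribution_is_distribution:
  assumes \<sigma>: "\<sigma> \<in> S"
  shows "is_distribution_on (value_distribution \<sigma>) (X \<rightarrow>\<^sub>E Ob)"
  unfolding is_distribution_on_def
proof (intro conjI allI impI)
  show "0 \<le> value_distribution \<sigma> s" for s
    unfolding value_distribution_def by (rule infsum_nonneg) (simp add: mu_nonneg[OF \<sigma>])
  show "value_distribution \<sigma> s = 0" if "s \<notin> X \<rightarrow>\<^sub>E Ob" for s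
    using that ontic_value_PiE by (metis value_distribution_eq_0)
  have "((\<lambda>l. if True then \<mu> \<sigma> l else 0) has_sum 1) \<Omega>" using mu_has_sum[OF \<sigma>] by simp
  then show "sum (value_distribution \<sigma>) (X \<rightarrow>\<^sub>E Ob) = 1"
    using has_sum_unique[OF has_sum_value_distribution_event[OF \<sigma>, of "\<lambda>_. True"]] by simp
qed

lemma marg_value_distribution:
  assumes \<sigma>: "\<sigma> \<in> S" and C: "C \<in> Mc" and t: "t \<in> C \<rightarrow>\<^sub>E Ob"
  shows "marg Ob X (value_distribution \<sigma>) C t = sig \<sigma> C t"
proof -
  have marg: "((\<lambda>l. if restrict (ontic_value l) C = t then \<mu> \<sigma> l else 0) has_sum
      marg Ob X (value_distribution \<sigma>) C t) \<Omega>"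
    using has_sum_value_distribution_event[OF \<sigma>] by (simp add: marg_eq_sum_if[OF finite_X finite_Ob])
  show ?thesis
  proof (cases "C = {}")
    case True
    text \<open>The empty context, possible only if \<open>X = {}\<close>: both sides are the total mass.\<close>
    then have "t = (\<lambda>_. undefined)" using t by simp
    moreover have "sum (sig \<sigma> C) (C \<rightarrow>\<^sub>E Ob) = 1"
      using empirical \<sigma> C unfolding empirical_theory_def is_distribution_on_def by blast
    moreover have "((\<lambda>l. if restrict (ontic_value l) C = t then \<mu> \<sigma> l else 0) has_sum 1) \<Omega>"
      using mu_has_sum[OF \<sigma>] True \<open>t = (\<lambda>_. undefined)\<close> by (simp add: restrict_def)
    ultimately show ?thesis using has_sum_unique[OF marg] True by simp
  next
    case False
    then have "C \<in> OpM Mc" using C unfolding OpM_def by auto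
    then have "((\<lambda>l. \<xi> C l t * \<mu> \<sigma> l) has_sum Opd Mc Ob sig \<sigma> C t) \<Omega>"
      using xi_has_sum[OF \<sigma>] t unfolding OpO_def by simp
    then have "((\<lambda>l. if restrict (ontic_value l) C = t then \<mu> \<sigma> l else 0) has_sum Opd Mc Ob sig \<sigma> C t) \<Omega>"
      by (rule has_sum_cong[THEN iffD1, rotated]) (auto simp: xi_eq_indicator[OF \<open>C \<in> OpM Mc\<close>])
    then show ?thesis
      using has_sum_unique[OF marg] sigU_context[OF C t] unfolding Opd_def by simp
  qed
qed

lemma value_distribution_global_section: "global_section X Mc S Ob sig value_distribution"
  unfolding global_section_def
  using value_distribution_is_distribution marg_value_distribution by blast

text \<open>Label-equivalent \<open>x, x'\<close> give operationally equivalent effects \<open>({x}, v)\<close> and \<open>({x'}, v)\<close>,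
  so non-contextuality forces every ontic state to assign them the same value.\<close>

lemma ontic_value_label_equiv:
  assumes "x \<in> X" "x' \<in> X" "label_equiv Mc S Ob sig x x'" "l \<in> \<Omega>"
  shows "ontic_value l x = ontic_value l x'"
proof -
  let ?v = "ontic_value l x"
  have v: "?v \<in> Ob" using ontic_value_in[OF assms(1,4)] .
  have "effect_equiv S (OpM Mc) (OpO Ob) (Opd Mc Ob sig) {x} (\<lambda>_\<in>{x}. ?v) {x'} (\<lambda>_\<in>{x'}. ?v)"
    using assms(3) v unfolding effect_equiv_def label_equiv_def Opd_def by blast
  moreover have "(\<lambda>_\<in>{x}. ?v) \<in> OpO Ob {x}" "(\<lambda>_\<in>{x'}. ?v) \<in> OpO Ob {x'}"
    using v unfolding OpO_def by auto
  ultimately have "\<xi> {x} l (\<lambda>_\<in>{x}. ?v) = \<xi> {x'} l (\<lambda>_\<in>{x'}. ?v)"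
    using noncontextual singleton_OpM[OF assms(1)] singleton_OpM[OF assms(2)] assms(4)
    unfolding noncontextual_rep_def by blast
  then have "\<xi> {x'} l (\<lambda>_\<in>{x'}. ?v) = 1" using xi_ontic_value[OF assms(1,4)] by simp
  then show ?thesis using ontic_value_unique[OF assms(2,4) v] by simp
qed

lemma value_distribution_admissible: "canonical_admissible X Mc S Ob sig value_distribution"
  unfolding canonical_admissible_def
proof (intro conjI ballI allI impI)
  show "global_section X Mc S Ob sig value_distribution" by (rule value_distribution_global_section)
next
  fix \<sigma> and s :: "'x \<Rightarrow> 'o" and x x' assume "x \<in> X" "x' \<in> X" "label_equiv Mc S Ob sig x x' \<and> s x \<noteq> s x'"
  then show "value_distribution \<sigma> s = 0"
    using ontic_value_label_equiv by (intro value_distribution_eq_0) metis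
next
  fix \<sigma> \<sigma>' assume "\<sigma> \<in> S" "\<sigma>' \<in> S" "state_equiv Mc Ob sig \<sigma> \<sigma>'"
  then have "\<mu> \<sigma> = \<mu> \<sigma>'" using mu_eq_if_prep_equiv prep_equiv_if_state_equiv[where S=S] by blast
  then show "value_distribution \<sigma> = value_distribution \<sigma>'"
    unfolding value_distribution_def by (intro ext) (simp only:)
qed

lemma can_Omega_value_distribution:
  assumes "t \<in> can_Omega X Mc S Ob sig value_distribution"
  obtains l where "l \<in> \<Omega>" "ontic_value l = lift t X"
  using assms value_distribution_eq_0 unfolding can_Omega_def by force

lemma canonical_noncontextual:
  "noncontextual_rep S (OpM Mc) (OpO Ob) (Opd Mc Ob sig) (can_Omega X Mc S Ob sig value_distribution)
     (can_mu X Mc S Ob sig value_distribution) (can_xi X Mc S Ob sig)"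
  unfolding noncontextual_rep_def
proof (intro conjI ballI impI)
  fix \<sigma> \<sigma>' assume "\<sigma> \<in> S" "\<sigma>' \<in> S" "prep_equiv S (OpM Mc) (OpO Ob) (Opd Mc Ob sig) \<sigma> \<sigma>'"
  then have "\<mu> \<sigma> = \<mu> \<sigma>'" by (rule mu_eq_if_prep_equiv)
  then show "can_mu X Mc S Ob sig value_distribution \<sigma> = can_mu X Mc S Ob sig value_distribution \<sigma>'"
    unfolding can_mu_def value_distribution_def by (intro ext) (simp only:)
next
  fix m k m' k' t
  assume m: "m \<in> OpM Mc" "k \<in> OpO Ob m" and m': "m' \<in> OpM Mc" "k' \<in> OpO Ob m'"
    and equiv: "effect_equiv S (OpM Mc) (OpO Ob) (Opd Mc Ob sig) m k m' k'"
    and t: "t \<in> can_Omega X Mc S Ob sig value_distribution"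
  obtain l where l: "l \<in> \<Omega>" "ontic_value l = lift t X" using can_Omega_value_distribution[OF t] .
  have "can_xi X Mc S Ob sig U t = \<xi> U l" if "U \<in> OpM Mc" for U
    using xi_eq_indicator[OF that l(1)] lift_ontic_restrict[OF OpM_subset[OF that]] l(2)
    unfolding can_xi_def by auto
  moreover have "\<xi> m l k = \<xi> m' l k'"
    using noncontextual m m' equiv l(1) unfolding noncontextual_rep_def by blast
  ultimately show "can_xi X Mc S Ob sig m t k = can_xi X Mc S Ob sig m' t k'"
    using m(1) m'(1) by simp
qed

lemma value_distribution_convex:
  assumes "(p, cs) \<in> CP"
  shows "value_distribution p s = (\<Sum>(c, q)\<leftarrow>cs. c * value_distribution q s)"
proof -
  have "((\<lambda>l. \<Sum>(c, q)\<leftarrow>cs. c * (if ontic_value l = s then \<mu> q l else 0)) has_sum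
      (\<Sum>(c, q)\<leftarrow>cs. c * value_distribution q s)) \<Omega>"
    using has_sum_value_distribution convex_decomposition(2)[OF assms]
    by (intro has_sum_weighted_sum_list) blast
  moreover have "((\<lambda>l. \<Sum>(c, q)\<leftarrow>cs. c * (if ontic_value l = s then \<mu> q l else 0)) has_sum
      value_distribution p s) \<Omega>"
  proof -
    have "(\<Sum>(c, q)\<leftarrow>cs. c * (if ontic_value l = s then \<mu> q l else 0))
        = (if ontic_value l = s then \<mu> p l else 0)" for l
      by (cases "ontic_value l = s") (simp_all add: convex_decomposition(3)[OF assms] case_prod_unfold)
    then show ?thesis using has_sum_value_distribution[OF convex_decomposition(1)[OF assms], of s] by simp
  qed
  ultimately show ?thesis using has_sum_unique by blast
qed

lemma canonical_preserves_convexity: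
  "preserves_convexity (OpO Ob) CP CM (can_Omega X Mc S Ob sig value_distribution)
     (can_mu X Mc S Ob sig value_distribution) (can_xi X Mc S Ob sig)"
  unfolding preserves_convexity_def
proof (intro conjI)
  show "\<forall>(p, cs)\<in>CP. \<forall>t. can_mu X Mc S Ob sig value_distribution p t
          = (\<Sum>(c, q)\<leftarrow>cs. c * can_mu X Mc S Ob sig value_distribution q t)"
  proof -
    have "can_mu X Mc S Ob sig value_distribution p t
        = (\<Sum>(c, q)\<leftarrow>cs. c * can_mu X Mc S Ob sig value_distribution q t)" if "(p, cs) \<in> CP" for p cs t
      using value_distribution_convex[OF that]
      by (cases "t \<in> can_Omega X Mc S Ob sig value_distribution") (simp_all add: can_mu_def case_prod_unfold)
    then show ?thesis by blast
  qed
  show "\<forall>(m, cs)\<in>CM. \<forall>t\<in>can_Omega X Mc S Ob sig value_distribution. \<forall>k\<in>OpO Ob m.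
          can_xi X Mc S Ob sig m t k = (\<Sum>(c, m')\<leftarrow>cs. c * can_xi X Mc S Ob sig m' t k)"
    using canonical_response_convex[OF convex] by blast
qed

lemma admits_nc_canonical_rep: "admits_nc_canonical_rep X Mc S Ob sig CP CM"
  unfolding admits_nc_canonical_rep_def Let_def
  using value_distribution_admissible canonical_ontological_rep canonical_noncontextual
    canonical_preserves_convexity by blast

end

theorem mainTheorem7:
  fixes X :: "'x set" and Mc :: "'x set set" and S :: "'s set" and Ob :: "'o set"
    and sig :: "'s \<Rightarrow> 'x set \<Rightarrow> ('x \<Rightarrow> 'o) \<Rightarrow> real"
    and CP :: "('s \<times> (real \<times> 's) list) set"
    and CM :: "('x set \<times> (real \<times> 'x set) list) set"
  assumes "empirical_theory X Mc S Ob sig"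
    and "no_signalling Mc S Ob sig"
    and "convex_structure S (OpM Mc) (OpO Ob) CP CM"
    and "\<forall>U\<in>OpM Mc. perfectly_predictable S (OpO Ob) (Opd Mc Ob sig) U"
    and "\<exists>pmix. maximally_mixed S (OpM Mc) (OpO Ob) (Opd Mc Ob sig) CP pmix"
  shows "noncontextual_convex_theory S (OpM Mc) (OpO Ob) (Opd Mc Ob sig) CP CM
         \<longleftrightarrow> admits_nc_canonical_rep X Mc S Ob sig CP CM"
proof
  assume "noncontextual_convex_theory S (OpM Mc) (OpO Ob) (Opd Mc Ob sig) CP CM"
  then obtain \<Omega> :: "nat set" and \<mu> \<xi> where
    "ontological_rep S (OpM Mc) (OpO Ob) (Opd Mc Ob sig) \<Omega> \<mu> \<xi>"
    "noncontextual_rep S (OpM Mc) (OpO Ob) (Opd Mc Ob sig) \<Omega> \<mu> \<xi>"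
    "preserves_convexity (OpO Ob) CP CM \<Omega> \<mu> \<xi>"
    unfolding noncontextual_convex_theory_def by blast
  moreover obtain pmix where "maximally_mixed S (OpM Mc) (OpO Ob) (Opd Mc Ob sig) CP pmix"
    using assms(5) by blast
  ultimately interpret noncontextual_empirical_model X Mc S Ob sig CP CM \<Omega> \<mu> \<xi> pmix
    using assms(1-4) by unfold_locales
  show "admits_nc_canonical_rep X Mc S Ob sig CP CM" by (rule admits_nc_canonical_rep)
next
  assume "admits_nc_canonical_rep X Mc S Ob sig CP CM"
  then show "noncontextual_convex_theory S (OpM Mc) (OpO Ob) (Opd Mc Ob sig) CP CM"
    unfolding admits_nc_canonical_rep_def Let_def by (blast intro: noncontextual_convex_theoryI)
qed

end
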